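(* Let $D_5$ be the undirected tree with vertices $v,a,b,c,d$ and edges $va, vb, vc, cd$. Let $\Gamma$ be a vertex-transitive connected undirected graph with more than five vertices that contains a subgraph isomorphic to $D_5$, and suppose $\Upsilon_v(D_5,\Gamma)$ is finite. Then $\Upsilon_v^{\mathrm{sym}}(D_5,\Gamma)<5\,\Upsilon_v(D_5,\Gamma)$. In particular, $D_5$ is not vertex-costly in the class of vertex-transitive connected graphs.
   Context: Undirected graphs (loops and multiple edges may be present in $\Gamma$). "Subgraph" means an arbitrary (not necessarily induced) subgraph. A graph is vertex-transitive if its automorphism group acts transitively on its vertices. $\Upsilon_v(K,\Gamma)$ is the minimal integer $n$ such that $\Gamma$ has a set $X$ of $n$ vertices with every subgraph of $\Gamma$ isomorphic to $K$ containing a vertex of $X$; $\Upsilon_v^{\mathrm{sym}}(K,\Gamma)$ is the minimal such $n$ when $X$ is additionally required to be $\mathrm{Aut}\,\Gamma$-invariant. A finite graph $K$ with $k$ vertices is vertex-costly in a class $\mathcal{K}$ if for every integer $m$ there exists $\Gamma_m\in\mathcal{K}$ with $\Upsilon_v^{\mathrm{sym}}(K,\Gamma_m)=k\cdot\Upsilon_v(K,\Gamma_m)\ge m$. *)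

theory Defs
  imports Main "HOL-Library.Extended_Nat"
begin

definition multigraph :: "'v set \<Rightarrow> 'e set \<Rightarrow> ('e \<Rightarrow> 'v set) \<Rightarrow> bool" where
  "multigraph V E ends \<longleftrightarrow> (\<forall>e\<in>E. ends e \<subseteq> V \<and> (card (ends e) = 1 \<or> card (ends e) = 2))"

definition adj :: "'e set \<Rightarrow> ('e \<Rightarrow> 'v set) \<Rightarrow> 'v \<Rightarrow> 'v \<Rightarrow> bool" where
  "adj E ends x y \<longleftrightarrow> (\<exists>e\<in>E. ends e = {x, y})"

definition is_aut :: "'v set \<Rightarrow> 'e set \<Rightarrow> ('e \<Rightarrow> 'v set) \<Rightarrow> ('v \<Rightarrow> 'v) \<Rightarrow> ('e \<Rightarrow> 'e) \<Rightarrow> bool" where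
  "is_aut V E ends f g \<longleftrightarrow> bij_betw f V V \<and> bij_betw g E E \<and> (\<forall>e\<in>E. ends (g e) = f ` ends e)"

definition vertex_transitive :: "'v set \<Rightarrow> 'e set \<Rightarrow> ('e \<Rightarrow> 'v set) \<Rightarrow> bool" where
  "vertex_transitive V E ends \<longleftrightarrow>
     (\<forall>x\<in>V. \<forall>y\<in>V. \<exists>f g. is_aut V E ends f g \<and> f x = y)"

definition connected_graph :: "'v set \<Rightarrow> 'e set \<Rightarrow> ('e \<Rightarrow> 'v set) \<Rightarrow> bool" where
  "connected_graph V E ends \<longleftrightarrow> V \<noteq> {} \<and>
     (\<forall>x\<in>V. \<forall>y\<in>V. (x, y) \<in> {(u, w). adj E ends u w}\<^sup>*)"

text \<open>A subgraph of the graph isomorphic to D5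
  is given by an injective vertex assignment with the four required adjacencies
  (edges are then distinct automatically since their end-pairs differ).\<close>
definition D5_copy :: "'v set \<Rightarrow> 'e set \<Rightarrow> ('e \<Rightarrow> 'v set) \<Rightarrow> 'v \<Rightarrow> 'v \<Rightarrow> 'v \<Rightarrow> 'v \<Rightarrow> 'v \<Rightarrow> bool" where
  "D5_copy V E ends v a b c d \<longleftrightarrow>
     {v, a, b, c, d} \<subseteq> V \<and> distinct [v, a, b, c, d] \<and>
     adj E ends v a \<and> adj E ends v b \<and> adj E ends v c \<and> adj E ends c d"

definition D5_vertex_cover :: "'v set \<Rightarrow> 'e set \<Rightarrow> ('e \<Rightarrow> 'v set) \<Rightarrow> 'v set \<Rightarrow> bool" where
  "D5_vertex_cover V E ends X \<longleftrightarrow> X \<subseteq> V \<and>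
     (\<forall>v a b c d. D5_copy V E ends v a b c d \<longrightarrow> {v, a, b, c, d} \<inter> X \<noteq> {})"

definition aut_invariant :: "'v set \<Rightarrow> 'e set \<Rightarrow> ('e \<Rightarrow> 'v set) \<Rightarrow> 'v set \<Rightarrow> bool" where
  "aut_invariant V E ends X \<longleftrightarrow> (\<forall>f g. is_aut V E ends f g \<longrightarrow> f ` X = X)"

text \<open>Upsilon_v(D5, Gamma) and its symmetric version, valued in enat (infinity if no finite set).\<close>
definition Upsilon_v_D5 :: "'v set \<Rightarrow> 'e set \<Rightarrow> ('e \<Rightarrow> 'v set) \<Rightarrow> enat" where
  "Upsilon_v_D5 V E ends =
     (INF X \<in> {X. finite X \<and> D5_vertex_cover V E ends X}. enat (card X))"

definition Upsilon_v_sym_D5 :: "'v set \<Rightarrow> 'e set \<Rightarrow> ('e \<Rightarrow> 'v set) \<Rightarrow> enat" where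
  "Upsilon_v_sym_D5 V E ends =
     (INF X \<in> {X. finite X \<and> D5_vertex_cover V E ends X \<and> aut_invariant V E ends X}. enat (card X))"

end

theory Submission
  imports Defs
begin

text \<open>
  If the graph is infinite, every finite vertex set misses some copy of \<open>D5\<close>: either all
  degrees are infinite and a copy is built greedily, or the graph is locally finite and a copy
  is moved by an automorphism far away from the set. Hence \<open>\<Upsilon>\<^sub>v = \<infinity>\<close>.

  If the graph is finite, the whole vertex set is an invariant cover, so it suffices to show
  \<open>|V| < 5 |X|\<close> for every cover \<open>X\<close>. By transitivity every vertex lies on the same number
  \<open>T\<close> of copies, so double counting incidences gives \<open>5 #copies = T |V|\<close> and
  \<open>#copies \<le> T |X|\<close>, with equality only if every copy meets \<open>X\<close> exactly once. This fails:
  for \<open>x \<in> X\<close> some copy avoids \<open>x\<close> but stays within distance 3 of it (a case analysis on the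
  degree, which is at least 3), this copy meets \<open>X\<close> in some \<open>y\<close>, and any two vertices at
  distance at most 3 lie on a common copy. The case analysis uses \<open>|V| \<ge> 6\<close> only to rule out
  components of the form \<open>K\<^sub>4\<close> and \<open>K\<^sub>5\<close>.
\<close>

lemma ex_notin_set_if_length_less_card:
  assumes "length xs < card A"
  shows "\<exists>y\<in>A. y \<notin> set xs"
  using assms by (meson card_length card_mono finite_set le_trans not_le subsetI)

lemma ex_notin_if_infinite:
  assumes "infinite A" "finite F"
  shows "\<exists>y\<in>A. y \<notin> F"
  using assms by (metis finite_subset subsetI)

definition D5_embedding :: "('v \<Rightarrow> 'v \<Rightarrow> bool) \<Rightarrow> 'v \<Rightarrow> 'v \<Rightarrow> 'v \<Rightarrow> 'v \<Rightarrow> 'v \<Rightarrow> bool" where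
  "D5_embedding edge v a b c d \<longleftrightarrow>
     distinct [v, a, b, c, d] \<and> edge v a \<and> edge v b \<and> edge v c \<and> edge c d"

lemma D5_embedding_map:
  assumes "D5_embedding edge v a b c d" "inj_on f {v, a, b, c, d}"
    and "\<forall>x y. edge x y \<longrightarrow> edge' (f x) (f y)"
  shows "D5_embedding edge' (f v) (f a) (f b) (f c) (f d)"
proof -
  have "distinct (map f [v, a, b, c, d])"
    using assms(1,2) distinct_map[of f "[v, a, b, c, d]"] unfolding D5_embedding_def by simp
  then show ?thesis
    using assms(1,3) unfolding D5_embedding_def by simp
qed

locale homogeneous_graph =
  fixes V :: "'v set" and edge :: "'v \<Rightarrow> 'v \<Rightarrow> bool"
  assumes edge_sym: "edge x y \<Longrightarrow> edge y x"
    and edge_irrefl: "\<not> edge x x"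
    and edge_in_V1: "edge x y \<Longrightarrow> x \<in> V"
    and homogeneous:
      "x \<in> V \<Longrightarrow> y \<in> V \<Longrightarrow> \<exists>f. inj_on f V \<and> (\<forall>a b. edge a b \<longrightarrow> edge (f a) (f b)) \<and> f x = y"
begin

abbreviation D5 :: "'v \<Rightarrow> 'v \<Rightarrow> 'v \<Rightarrow> 'v \<Rightarrow> 'v \<Rightarrow> bool" where
  "D5 \<equiv> D5_embedding edge"

definition nbhd :: "'v \<Rightarrow> 'v set" where
  "nbhd x = {y. edge x y}"

lemma in_nbhd_iff [simp]: "y \<in> nbhd x \<longleftrightarrow> edge x y"
  by (simp add: nbhd_def)

lemma edge_in_V2: "edge x y \<Longrightarrow> y \<in> V"
  using edge_in_V1 edge_sym by blast

declare edge_irrefl [simp]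

lemma edge_commute: "edge x y \<longleftrightarrow> edge y x"
  using edge_sym by blast

lemma edge_neq: "edge x y \<Longrightarrow> x \<noteq> y"
  using edge_irrefl by blast

lemma nbhd_subset_V: "nbhd x \<subseteq> V"
  using edge_in_V2 by auto

lemma nbhd_eq_empty: "x \<notin> V \<Longrightarrow> nbhd x = {}"
  using edge_in_V1 by auto

lemma D5I:
  assumes "edge v a" "edge v b" "edge v c" "edge c d" "distinct [a, b, c]" "d \<notin> {v, a, b}"
  shows "D5 v a b c d"
proof -
  have "distinct [v, a, b, c, d]"
    using assms edge_neq[OF assms(1)] edge_neq[OF assms(2)] edge_neq[OF assms(3)] edge_neq[OF assms(4)]
    by auto
  then show ?thesis
    using assms(1-4) unfolding D5_embedding_def by blast
qed

lemma D5_subset_V: "D5 v a b c d \<Longrightarrow> {v, a, b, c, d} \<subseteq> V"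
  unfolding D5_embedding_def using edge_in_V1 edge_in_V2 by auto

lemma D5_transfer:
  assumes "D5 v a b c d" "inj_on f V" "\<forall>x y. edge x y \<longrightarrow> edge (f x) (f y)"
  shows "D5 (f v) (f a) (f b) (f c) (f d)"
  using D5_embedding_map[OF assms(1) inj_on_subset[OF assms(2) D5_subset_V[OF assms(1)]] assms(3)] .

lemma nbhd_embeds:
  assumes "x \<in> V" "y \<in> V"
  obtains f where "inj_on f (nbhd x)" "f ` nbhd x \<subseteq> nbhd y"
proof -
  obtain f where f: "inj_on f V" "\<forall>a b. edge a b \<longrightarrow> edge (f a) (f b)" "f x = y"
    using homogeneous[OF assms] by blast
  then have "f ` nbhd x \<subseteq> nbhd y"
    by auto
  moreover have "inj_on f (nbhd x)"
    using f(1) nbhd_subset_V by (rule inj_on_subset)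
  ultimately show thesis
    using that by blast
qed

lemma finite_nbhd_transfer:
  assumes "x \<in> V" "y \<in> V" "finite (nbhd y)"
  shows "finite (nbhd x)"
proof -
  obtain f where "inj_on f (nbhd x)" "f ` nbhd x \<subseteq> nbhd y"
    using nbhd_embeds[OF assms(1,2)] .
  then show ?thesis
    using assms(3) finite_imageD finite_subset by blast
qed

lemma card_nbhd_le:
  assumes "x \<in> V" "y \<in> V" "finite (nbhd y)"
  shows "card (nbhd x) \<le> card (nbhd y)"
proof -
  obtain f where "inj_on f (nbhd x)" "f ` nbhd x \<subseteq> nbhd y"
    using nbhd_embeds[OF assms(1,2)] .
  then show ?thesis
    using assms(3) card_inj_on_le by blast
qed

lemma D5_avoiding_if_infinite_degrees:
  assumes "infinite V" "finite X" "\<forall>x\<in>V. infinite (nbhd x)"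
  shows "\<exists>v a b c d. D5 v a b c d \<and> {v, a, b, c, d} \<inter> X = {}"
proof -
  obtain v where v: "v \<in> V" "v \<notin> X"
    using ex_notin_if_infinite[OF assms(1,2)] by blast
  obtain a where a: "edge v a" "a \<notin> X"
    using ex_notin_if_infinite[of "nbhd v" X] assms v by auto
  obtain b where b: "edge v b" "b \<notin> insert a X"
    using ex_notin_if_infinite[of "nbhd v" "insert a X"] assms v by auto
  obtain c where c: "edge v c" "c \<notin> {a, b} \<union> X"
    using ex_notin_if_infinite[of "nbhd v" "{a, b} \<union> X"] assms v by auto
  obtain d where d: "edge c d" "d \<notin> {v, a, b} \<union> X"
    using ex_notin_if_infinite[of "nbhd c" "{v, a, b} \<union> X"] assms edge_in_V2[OF c(1)] by auto
  have "D5 v a b c d"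
    using a b c d by (intro D5I) auto
  moreover have "{v, a, b, c, d} \<inter> X = {}"
    using v a b c d by auto
  ultimately show ?thesis
    by blast
qed

definition ball2 :: "'v \<Rightarrow> 'v set" where
  "ball2 x = insert x (nbhd x \<union> (\<Union>y\<in>nbhd x. nbhd y))"

lemma ball2_sym: "y \<in> ball2 x \<Longrightarrow> x \<in> ball2 y"
  unfolding ball2_def using edge_sym by fastforce

lemma D5_subset_ball2: "D5 v a b c d \<Longrightarrow> {v, a, b, c, d} \<subseteq> ball2 v"
  unfolding D5_embedding_def ball2_def by auto

lemma finite_ball2: "\<forall>y\<in>V. finite (nbhd y) \<Longrightarrow> finite (ball2 x)"
  unfolding ball2_def using nbhd_eq_empty nbhd_subset_V
  by (cases "x \<in> V") auto

lemma D5_avoiding_if_locally_finite: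
  assumes "infinite V" "finite X" "\<forall>x\<in>V. finite (nbhd x)" "D5 v a b c d"
  shows "\<exists>v a b c d. D5 v a b c d \<and> {v, a, b, c, d} \<inter> X = {}"
proof -
  have "finite (\<Union>x\<in>X. ball2 x)"
    using assms(2) finite_ball2[OF assms(3)] by simp
  then obtain w where w: "w \<in> V" "w \<notin> (\<Union>x\<in>X. ball2 x)"
    using ex_notin_if_infinite[OF assms(1)] by blast
  have "v \<in> V"
    using D5_subset_V[OF assms(4)] by simp
  then obtain f where f: "inj_on f V" "\<forall>x y. edge x y \<longrightarrow> edge (f x) (f y)" "f v = w"
    using homogeneous[OF _ w(1)] by blast
  have copy: "D5 (f v) (f a) (f b) (f c) (f d)"
    using D5_transfer[OF assms(4) f(1,2)] .
  have "z \<notin> X" if "z \<in> {f v, f a, f b, f c, f d}" for z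
  proof
    assume "z \<in> X"
    moreover have "z \<in> ball2 w"
      using D5_subset_ball2[OF copy] that f(3) by auto
    then have "w \<in> ball2 z"
      by (rule ball2_sym)
    ultimately show False
      using w(2) by blast
  qed
  then have "{f v, f a, f b, f c, f d} \<inter> X = {}"
    by blast
  then show ?thesis
    using copy by blast
qed

lemma D5_avoiding_finite_set:
  assumes "infinite V" "finite X" "\<exists>v a b c d. D5 v a b c d"
  shows "\<exists>v a b c d. D5 v a b c d \<and> {v, a, b, c, d} \<inter> X = {}"
proof (cases "\<exists>x\<in>V. infinite (nbhd x)")
  case True
  then have "\<forall>x\<in>V. infinite (nbhd x)"
    using finite_nbhd_transfer by blast
  then show ?thesis
    using D5_avoiding_if_infinite_degrees assms(1,2) by blast
next
  case False
  obtain v a b c d where "D5 v a b c d"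
    using assms(3) by blast
  with False show ?thesis
    using D5_avoiding_if_locally_finite[OF assms(1,2)] by blast
qed

end

locale finite_D5_graph = homogeneous_graph V edge for V :: "'v set" and edge +
  assumes finite_V: "finite V"
    and connected: "S \<subseteq> V \<Longrightarrow> x \<in> S \<Longrightarrow> \<forall>s\<in>S. \<forall>y. edge s y \<longrightarrow> y \<in> S \<Longrightarrow> S = V"
    and card_V_ge_6: "6 \<le> card V"
    and D5_exists: "\<exists>v a b c d. D5 v a b c d"
begin

lemma finite_nbhd: "finite (nbhd x)"
  using finite_V nbhd_subset_V by (rule finite_subset[rotated])

definition degree :: nat where
  "degree = card (nbhd (SOME x. x \<in> V))"

lemma card_nbhd:
  assumes "x \<in> V"
  shows "card (nbhd x) = degree"
proof -
  have "V \<noteq> {}"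
    using card_V_ge_6 by auto
  then have "(SOME x. x \<in> V) \<in> V"
    by (simp add: some_in_eq)
  then show ?thesis
    unfolding degree_def using card_nbhd_le[OF _ _ finite_nbhd] assms le_antisym by metis
qed

lemma card_closed_nbhd:
  assumes "x \<in> V"
  shows "card (insert x (nbhd x)) = Suc degree"
  using assms card_nbhd finite_nbhd edge_irrefl by simp

lemma closed_nbhd_eq_if_subset:
  assumes "x \<in> V" "y \<in> V" "insert x (nbhd x) \<subseteq> insert y (nbhd y)"
  shows "insert x (nbhd x) = insert y (nbhd y)"
  using card_subset_eq[OF _ assms(3)] card_closed_nbhd assms(1,2) finite_nbhd by simp

lemma degree_ge_3: "3 \<le> degree"
proof -
  obtain v a b c d where copy: "D5 v a b c d"
    using D5_exists by blast
  then have "{a, b, c} \<subseteq> nbhd v" "card {a, b, c} = 3" "v \<in> V"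
    unfolding D5_embedding_def using edge_in_V1 by auto
  then show ?thesis
    using card_mono[OF finite_nbhd] card_nbhd by metis
qed

lemma card_ge_6_if_nbhd_closed:
  assumes "S \<subseteq> V" "x \<in> S" "\<forall>s\<in>S. nbhd s \<subseteq> S"
  shows "6 \<le> card S"
proof -
  have "\<forall>s\<in>S. \<forall>y. edge s y \<longrightarrow> y \<in> S"
    using assms(3) in_nbhd_iff by blast
  then have "S = V"
    by (rule connected[OF assms(1,2)])
  then show ?thesis
    using card_V_ge_6 by simp
qed

lemma ex_neighbour_notin:
  assumes "x \<in> V" "length xs < degree"
  obtains y where "edge x y" "y \<notin> set xs"
  using ex_notin_set_if_length_less_card[of xs "nbhd x"] assms card_nbhd by auto

lemma nbhd_eq_set:
  assumes "x \<in> V" "set ys \<subseteq> nbhd x" "distinct ys" "length ys = degree"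
  shows "nbhd x = set ys"
  using card_subset_eq[OF finite_nbhd assms(2)] distinct_card[OF assms(3)] assms card_nbhd by simp

text \<open>If all neighbours of \<open>u\<close> but one have their neighbourhoods inside the closed
  neighbourhood \<open>N[u]\<close>, regularity forces \<open>N[u]\<close> to be a whole component, of size
  \<open>degree + 1\<close>.\<close>
lemma degree_ge_5_if_closed_nbhd:
  assumes "edge u x" "\<forall>c\<in>nbhd u - {x}. nbhd c \<subseteq> insert u (nbhd u)"
  shows "5 \<le> degree"
proof -
  define S where "S = insert u (nbhd u)"
  have u: "u \<in> V" and x: "x \<in> V"
    using assms(1) edge_in_V1 edge_in_V2 by auto
  have edge_x: "edge c x" if c: "c \<in> nbhd u - {x}" for c
  proof -
    have "insert c (nbhd c) = S"
      unfolding S_def using assms(2) c u edge_in_V2 by (intro closed_nbhd_eq_if_subset) auto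
    then show ?thesis
      unfolding S_def using assms(1) c by auto
  qed
  have "S \<subseteq> insert x (nbhd x)"
  proof
    fix s assume "s \<in> S"
    then consider "s = u" | "s = x" | "s \<in> nbhd u - {x}"
      unfolding S_def by blast
    then show "s \<in> insert x (nbhd x)"
      by cases (use assms(1) edge_x in \<open>auto simp: edge_commute\<close>)
  qed
  then have S_x: "insert x (nbhd x) = S"
    unfolding S_def using u x closed_nbhd_eq_if_subset by blast
  have "\<forall>s\<in>S. nbhd s \<subseteq> S"
  proof
    fix s assume "s \<in> S"
    then consider "s = u" | "s = x" | "s \<in> nbhd u - {x}"
      unfolding S_def by blast
    then show "nbhd s \<subseteq> S"
      by cases (use S_x assms(2) in \<open>auto simp: S_def\<close>)
  qed
  then have "6 \<le> card S"
    using card_ge_6_if_nbhd_closed[of S u] u nbhd_subset_V unfolding S_def by blast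
  then show ?thesis
    using card_closed_nbhd[OF u] unfolding S_def by simp
qed

lemma no_diamond_if_degree_3:
  assumes "degree = 3"
    and "edge p q" "edge p r" "edge p s" "edge q r" "edge q s" "r \<noteq> s"
  shows False
proof -
  have distinct: "distinct [p, q, r, s]"
    using assms(2-7) edge_neq by auto
  have p: "p \<in> V" and q: "q \<in> V" and r: "r \<in> V"
    using assms(2,3) edge_in_V1 edge_in_V2 by auto
  have Np: "nbhd p = {q, r, s}"
    using nbhd_eq_set[OF p, of "[q, r, s]"] assms distinct by auto
  have Nq: "nbhd q = {p, r, s}"
    using nbhd_eq_set[OF q, of "[p, r, s]"] assms distinct by (auto simp: edge_commute)
  show False
  proof (cases "edge r s")
    case True
    have "nbhd r = {p, q, s}"
      using nbhd_eq_set[OF r, of "[p, q, s]"] assms True distinct by (auto simp: edge_commute)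
    then have "5 \<le> degree"
      using Nq Np by (intro degree_ge_5_if_closed_nbhd[OF assms(4)]) auto
    then show False
      using assms(1) by simp
  next
    case False
    txt \<open>Then the neighbourhood of \<open>r\<close> contains only one edge, whereas
      an embedding sending \<open>p\<close> to \<open>r\<close> produces a vertex of it with two
      neighbours in it.\<close>
    obtain t where t: "edge r t" "t \<notin> set [p, q]"
      using ex_neighbour_notin[OF r, of "[p, q]"] assms(1) by auto
    have Nr: "nbhd r = {p, q, t}"
      using nbhd_eq_set[OF r, of "[p, q, t]"] assms t distinct by (auto simp: edge_commute)
    have "t \<notin> nbhd p" "t \<notin> nbhd q"
      using Np Nq t False edge_neq[OF t(1)] by auto
    then have no_edge: "\<not> edge p t" "\<not> edge q t"
      by auto
    obtain f where f: "inj_on f V" "\<forall>a b. edge a b \<longrightarrow> edge (f a) (f b)" "f p = r"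
      using homogeneous[OF p r] by blast
    have no_cherry: False
      if "{a, b, c} \<subseteq> {p, q, t}" "edge a b" "edge a c" "b \<noteq> c" for a b c
      using that no_edge edge_irrefl by (auto simp: edge_commute)
    have "edge r (f q)" "edge r (f r)" "edge r (f s)"
      using f(2) assms(2-4) unfolding f(3)[symmetric] by auto
    then have "{f q, f r, f s} \<subseteq> {p, q, t}"
      unfolding Nr[symmetric] by simp
    moreover have "edge (f q) (f r)" "edge (f q) (f s)"
      using f(2) assms(5,6) by auto
    moreover have "f r \<noteq> f s"
      using f(1) assms(7) r edge_in_V2[OF assms(4)] by (meson inj_on_contraD)
    ultimately show False
      by (rule no_cherry)
  qed
qed

definition near :: "'v \<Rightarrow> 'v \<Rightarrow> bool" where
  "near x y \<longleftrightarrow> edge x y \<or> (\<exists>u. edge x u \<and> edge u y) \<or> (\<exists>u w. edge x u \<and> edge u w \<and> edge w y)"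

lemma near_edge: "edge x y \<Longrightarrow> near x y"
  and near_path_2: "edge x u \<Longrightarrow> edge u y \<Longrightarrow> near x y"
  and near_path_3: "edge x u \<Longrightarrow> edge u w \<Longrightarrow> edge w y \<Longrightarrow> near x y"
  unfolding near_def by blast+

definition common_D5 :: "'v \<Rightarrow> 'v \<Rightarrow> bool" where
  "common_D5 x y \<longleftrightarrow> (\<exists>v a b c d. D5 v a b c d \<and> {x, y} \<subseteq> {v, a, b, c, d})"

lemma common_D5I: "D5 v a b c d \<Longrightarrow> {x, y} \<subseteq> {v, a, b, c, d} \<Longrightarrow> common_D5 x y"
  unfolding common_D5_def by blast

lemma common_D5_if_leaf_extends:
  assumes "edge x y" "edge x p" "edge x q" "distinct [y, p, q]"
    and "c \<in> {y, p, q}" "edge c d" "d \<notin> {x, y, p, q}"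
  shows "common_D5 x y"
proof -
  from assms(5) consider "c = y" | "c = p" | "c = q"
    by blast
  then show ?thesis
  proof cases
    case 1
    then have "D5 x p q y d"
      using assms by (intro D5I) auto
    then show ?thesis
      by (rule common_D5I) auto
  next
    case 2
    then have "D5 x y q p d"
      using assms by (intro D5I) auto
    then show ?thesis
      by (rule common_D5I) auto
  next
    case 3
    then have "D5 x y p q d"
      using assms by (intro D5I) auto
    then show ?thesis
      by (rule common_D5I) auto
  qed
qed

lemma common_D5_if_edge:
  assumes "edge x y"
  shows "common_D5 x y"
proof (rule ccontr)
  assume no_common: "\<not> common_D5 x y"
  have x: "x \<in> V"
    using assms edge_in_V1 by blast
  obtain p where p: "edge x p" "p \<notin> set [y]"
    using ex_neighbour_notin[OF x, of "[y]"] degree_ge_3 by auto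
  obtain q where q: "edge x q" "q \<notin> set [y, p]"
    using ex_neighbour_notin[OF x, of "[y, p]"] degree_ge_3 by auto
  have closed: "nbhd c \<subseteq> {x, y, p, q}" if "c \<in> {y, p, q}" for c
  proof
    fix d assume "d \<in> nbhd c"
    then show "d \<in> {x, y, p, q}"
      using common_D5_if_leaf_extends[OF assms p(1) q(1) _ that] p q no_common by auto
  qed
  have "nbhd y \<subseteq> {x, p, q}"
    using closed[of y] by auto
  then have "card (nbhd y) \<le> card {x, p, q}"
    by (rule card_mono[rotated]) simp
  also have "\<dots> \<le> 3"
    using card_length[of "[x, p, q]"] by simp
  finally have "degree = 3"
    using card_nbhd[OF edge_in_V2[OF assms]] degree_ge_3 by simp
  then have "nbhd x = {y, p, q}"
    using nbhd_eq_set[OF x, of "[y, p, q]"] assms p q by auto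
  then have "\<forall>s\<in>{x, y, p, q}. nbhd s \<subseteq> {x, y, p, q}"
    using closed by blast
  moreover have "{x, y, p, q} \<subseteq> V"
    using x assms p q edge_in_V2 by auto
  ultimately have "6 \<le> card {x, y, p, q}"
    using card_ge_6_if_nbhd_closed by blast
  then show False
    using card_length[of "[x, y, p, q]"] by simp
qed

lemma common_D5_if_path_2:
  assumes "edge x u" "edge u y" "x \<noteq> y" "\<not> edge x y"
  shows "common_D5 x y"
proof -
  have x: "x \<in> V"
    using assms edge_in_V1 by blast
  obtain p where p: "edge x p" "p \<notin> set [u]"
    using ex_neighbour_notin[OF x, of "[u]"] degree_ge_3 by auto
  obtain q where q: "edge x q" "q \<notin> set [u, p]"
    using ex_neighbour_notin[OF x, of "[u, p]"] degree_ge_3 by auto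
  have "D5 x p q u y"
    using assms p q by (intro D5I) auto
  then show ?thesis
    by (rule common_D5I) auto
qed

lemma common_D5_if_path_3:
  assumes "edge x u" "edge u w" "edge w y" "x \<noteq> y" "\<not> edge x y" "\<not> edge x w"
  shows "common_D5 x y"
proof -
  have w: "w \<in> V"
    using assms edge_in_V1 by blast
  obtain p where p: "edge w p" "p \<notin> set [u, y]"
    using ex_neighbour_notin[OF w, of "[u, y]"] degree_ge_3 by auto
  have "D5 w y p u x"
    using assms p by (intro D5I) (auto simp: edge_commute)
  then show ?thesis
    by (rule common_D5I) auto
qed

lemma common_D5_if_near:
  assumes "near x y" "x \<noteq> y"
  shows "common_D5 x y"
proof (cases "edge x y")
  case True
  then show ?thesis
    by (rule common_D5_if_edge)
next
  case not_edge: False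
  show ?thesis
  proof (cases "\<exists>u. edge x u \<and> edge u y")
    case True
    then show ?thesis
      using common_D5_if_path_2 not_edge assms(2) by blast
  next
    case False
    then obtain u w where "edge x u" "edge u w" "edge w y" "\<not> edge x w"
      using assms(1) not_edge unfolding near_def by blast
    then show ?thesis
      using common_D5_if_path_3 not_edge assms(2) by blast
  qed
qed

definition near_avoiding_D5 :: "'v \<Rightarrow> bool" where
  "near_avoiding_D5 x \<longleftrightarrow>
     (\<exists>v a b c d. D5 v a b c d \<and> x \<notin> {v, a, b, c, d} \<and> (\<forall>z\<in>{v, a, b, c, d}. near x z))"

lemma near_avoiding_D5I:
  "D5 v a b c d \<Longrightarrow> x \<notin> {v, a, b, c, d} \<Longrightarrow>
    near x v \<Longrightarrow> near x a \<Longrightarrow> near x b \<Longrightarrow> near x c \<Longrightarrow> near x d \<Longrightarrow> near_avoiding_D5 x"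
  unfolding near_avoiding_D5_def by blast

lemma near_avoiding_D5_if_degree_ge_5:
  assumes "x \<in> V" "5 \<le> degree"
  shows "near_avoiding_D5 x"
proof -
  obtain u where u: "edge x u"
    using ex_neighbour_notin[OF assms(1), of "[]"] assms(2) by auto
  have "u \<in> V"
    using u edge_in_V2 by blast
  then obtain c where c: "edge u c" "c \<notin> set [x]"
    using ex_neighbour_notin[of u "[x]"] assms(2) by auto
  have "c \<in> V"
    using c edge_in_V2 by blast
  then obtain d where d: "edge c d" "d \<notin> set [u, x]"
    using ex_neighbour_notin[of c "[u, x]"] assms(2) by auto
  obtain a where a: "edge u a" "a \<notin> set [x, c, d]"
    using ex_neighbour_notin[OF \<open>u \<in> V\<close>, of "[x, c, d]"] assms(2) by auto
  obtain b where b: "edge u b" "b \<notin> set [x, c, d, a]"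
    using ex_neighbour_notin[OF \<open>u \<in> V\<close>, of "[x, c, d, a]"] assms(2) by auto
  have "D5 u a b c d"
    using a b c d by (intro D5I) auto
  moreover have "x \<notin> {u, a, b, c, d}"
    using u a b c d edge_neq by auto
  ultimately show ?thesis
    by (rule near_avoiding_D5I) (use u a b c d in \<open>blast intro: near_edge near_path_2 near_path_3\<close>)+
qed

lemma near_avoiding_D5_if_degree_ge_4:
  assumes "x \<in> V" "4 \<le> degree"
  shows "near_avoiding_D5 x"
proof -
  obtain u where u: "edge x u"
    using ex_neighbour_notin[OF assms(1), of "[]"] assms(2) by auto
  have "u \<in> V"
    using u edge_in_V2 by blast
  show ?thesis
  proof (cases "\<forall>c\<in>nbhd u - {x}. nbhd c \<subseteq> insert u (nbhd u)")
    case True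
    then have "5 \<le> degree"
      using u by (intro degree_ge_5_if_closed_nbhd) (auto simp: edge_commute)
    then show ?thesis
      using near_avoiding_D5_if_degree_ge_5[OF assms(1)] by blast
  next
    case False
    then obtain c d where "c \<in> nbhd u - {x}" "d \<in> nbhd c" "d \<notin> insert u (nbhd u)"
      by blast
    then have cd: "edge u c" "c \<noteq> x" "edge c d" "d \<notin> insert u (nbhd u)"
      by simp_all
    obtain a where a: "edge u a" "a \<notin> set [x, c]"
      using ex_neighbour_notin[OF \<open>u \<in> V\<close>, of "[x, c]"] assms(2) by auto
    obtain b where b: "edge u b" "b \<notin> set [x, c, a]"
      using ex_neighbour_notin[OF \<open>u \<in> V\<close>, of "[x, c, a]"] assms(2) by auto
    have "D5 u a b c d"
      using a b cd by (intro D5I) auto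
    moreover have "x \<notin> {u, a, b, c, d}"
      using u a b cd edge_neq by (auto simp: edge_commute)
    ultimately show ?thesis
      by (rule near_avoiding_D5I) (use u a b cd in \<open>blast intro: near_edge near_path_2 near_path_3\<close>)+
  qed
qed

lemma near_avoiding_D5_cubic_triangle:
  assumes "degree = 3" "edge x u" "nbhd u = {x, p, q}" "distinct [x, p, q]"
    and "nbhd p = {u, q, t}" "t \<notin> {u, q, x}"
  shows "near_avoiding_D5 x"
proof -
  have edges: "edge u p" "edge u q" "edge p q" "edge p t"
    using assms(3,5) in_nbhd_iff by blast+
  have "q \<in> V"
    using edges edge_in_V2 by blast
  then obtain r where r: "edge q r" "r \<notin> set [u, p]"
    using ex_neighbour_notin[of q "[u, p]"] assms(1) by auto
  consider "r = t" | "r = x" | "r \<notin> {t, x}"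
    by blast
  then show ?thesis
  proof cases
    case 1
    have False
      by (rule no_diamond_if_degree_3[OF assms(1), of p q u t])
        (use edges r 1 assms(6) in \<open>auto simp: edge_commute\<close>)
    then show ?thesis ..
  next
    case 2
    have False
      by (rule no_diamond_if_degree_3[OF assms(1), of u q x p])
        (use edges r 2 assms(2,4) in \<open>auto simp: edge_commute\<close>)
    then show ?thesis ..
  next
    case 3
    have "D5 p u t q r"
      using edges r 3 assms(6) by (intro D5I) (auto simp: edge_commute)
    moreover have "x \<notin> {p, u, t, q, r}"
      using assms(2,4,6) 3 edge_neq by auto
    ultimately show ?thesis
      by (rule near_avoiding_D5I)
        (use assms(2) edges r in \<open>blast intro: near_edge near_path_2 near_path_3 edge_sym\<close>)+
  qed
qed

lemma near_avoiding_D5_cubic_nonadjacent: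
  assumes "degree = 3" "edge x u" "nbhd u = {x, p, q}" "distinct [x, p, q]" "\<not> edge p x"
  shows "near_avoiding_D5 x"
proof -
  have edges: "edge u p" "edge u q"
    using assms(3) in_nbhd_iff by blast+
  have p: "p \<in> V"
    using edges edge_in_V2 by blast
  obtain s where s: "edge p s" "s \<notin> set [u]"
    using ex_neighbour_notin[OF p, of "[u]"] assms(1) by auto
  obtain t where t: "edge p t" "t \<notin> set [u, s]"
    using ex_neighbour_notin[OF p, of "[u, s]"] assms(1) by auto
  have Np: "nbhd p = {u, s, t}"
    using nbhd_eq_set[OF p, of "[u, s, t]"] assms(1) edges s t by (auto simp: edge_commute)
  have st: "s \<noteq> x" "t \<noteq> x"
    using s t assms(5) by auto
  consider "q \<notin> {s, t}" | "q = s" | "q = t"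
    by blast
  then show ?thesis
  proof cases
    case 1
    have "D5 p s t u q"
      using edges s t 1 assms(4) by (intro D5I) (auto simp: edge_commute)
    moreover have "x \<notin> {p, s, t, u, q}"
      using assms(2,4) st edge_neq by auto
    ultimately show ?thesis
      by (rule near_avoiding_D5I)
        (use assms(2) edges s t in \<open>blast intro: near_edge near_path_2 near_path_3\<close>)+
  next
    case 2
    show ?thesis
      using Np 2 s t st by (intro near_avoiding_D5_cubic_triangle[OF assms(1-4), of t]) auto
  next
    case 3
    show ?thesis
      using Np 3 s t st by (intro near_avoiding_D5_cubic_triangle[OF assms(1-4), of s]) auto
  qed
qed

lemma near_avoiding_D5_if_degree_3:
  assumes "x \<in> V" "degree = 3"
  shows "near_avoiding_D5 x"
proof -
  obtain u where u: "edge x u"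
    using ex_neighbour_notin[OF assms(1), of "[]"] assms(2) by auto
  have "u \<in> V"
    using u edge_in_V2 by blast
  obtain p where p: "edge u p" "p \<notin> set [x]"
    using ex_neighbour_notin[OF \<open>u \<in> V\<close>, of "[x]"] assms(2) by auto
  obtain q where q: "edge u q" "q \<notin> set [x, p]"
    using ex_neighbour_notin[OF \<open>u \<in> V\<close>, of "[x, p]"] assms(2) by auto
  have Nu: "nbhd u = {x, p, q}"
    using nbhd_eq_set[OF \<open>u \<in> V\<close>, of "[x, p, q]"] assms(2) u p q by (auto simp: edge_commute)
  consider "\<not> edge p x" | "\<not> edge q x" | "edge p x" "edge q x"
    by blast
  then show ?thesis
  proof cases
    case 1
    then show ?thesis
      using p q by (intro near_avoiding_D5_cubic_nonadjacent[OF assms(2) u Nu]) auto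
  next
    case 2
    have "nbhd u = {x, q, p}"
      using Nu by auto
    then show ?thesis
      using p q 2 by (intro near_avoiding_D5_cubic_nonadjacent[OF assms(2) u]) auto
  next
    case 3
    have False
      by (rule no_diamond_if_degree_3[OF assms(2), of x u p q])
        (use 3 u p q in \<open>auto simp: edge_commute\<close>)
    then show ?thesis ..
  qed
qed

lemma near_avoiding_D5:
  assumes "x \<in> V"
  shows "near_avoiding_D5 x"
  using degree_ge_3 near_avoiding_D5_if_degree_3[OF assms] near_avoiding_D5_if_degree_ge_4[OF assms]
  by linarith

lemma D5_meeting_cover_twice:
  assumes "X \<subseteq> V" "\<forall>v a b c d. D5 v a b c d \<longrightarrow> {v, a, b, c, d} \<inter> X \<noteq> {}"
  obtains v a b c d where "D5 v a b c d" "2 \<le> card ({v, a, b, c, d} \<inter> X)"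
proof -
  obtain v0 a0 b0 c0 d0 where "D5 v0 a0 b0 c0 d0"
    using D5_exists by blast
  then obtain x where x: "x \<in> X"
    using assms(2) by blast
  then obtain v a b c d where copy: "D5 v a b c d" "x \<notin> {v, a, b, c, d}"
    and near: "\<forall>z\<in>{v, a, b, c, d}. near x z"
    using near_avoiding_D5[of x] assms(1) unfolding near_avoiding_D5_def by blast
  obtain y where y: "y \<in> X" "y \<in> {v, a, b, c, d}"
    using assms(2)[rule_format, OF copy(1)] by blast
  have "common_D5 x y"
    using near y copy(2) by (intro common_D5_if_near) auto
  then obtain v' a' b' c' d' where copy': "D5 v' a' b' c' d'" "{x, y} \<subseteq> {v', a', b', c', d'}"
    unfolding common_D5_def by metis
  have "card {x, y} \<le> card ({v', a', b', c', d'} \<inter> X)"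
    using copy'(2) x y by (intro card_mono) auto
  moreover have "card {x, y} = 2"
    using y copy(2) by auto
  ultimately have "2 \<le> card ({v', a', b', c', d'} \<inter> X)"
    by simp
  with copy'(1) show thesis
    by (rule that)
qed

text \<open>Copies are counted as labelled embeddings; this multiplies every count by
  \<open>|Aut D5| = 2\<close> and does not affect the double counting.\<close>
definition D5_lists :: "'v list set" where
  "D5_lists = {[v, a, b, c, d] | v a b c d. D5 v a b c d}"

lemma D5_lists_memD:
  assumes "l \<in> D5_lists"
  shows "set l \<subseteq> V" "card (set l) = 5"
proof -
  obtain v a b c d where "l = [v, a, b, c, d]" "D5 v a b c d"
    using assms unfolding D5_lists_def by blast
  then show "set l \<subseteq> V" "card (set l) = 5"
    using D5_subset_V distinct_card unfolding D5_embedding_def by fastforce+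
qed

lemma finite_D5_lists: "finite D5_lists"
proof -
  have "D5_lists \<subseteq> {l. set l \<subseteq> V \<and> length l = 5}"
    unfolding D5_lists_def using D5_subset_V by auto
  then show ?thesis
    using finite_lists_length_eq[OF finite_V] by (rule finite_subset)
qed

lemma card_D5_lists_through_le:
  assumes "x \<in> V" "y \<in> V"
  shows "card {l \<in> D5_lists. x \<in> set l} \<le> card {l \<in> D5_lists. y \<in> set l}"
proof -
  obtain f where f: "inj_on f V" "\<forall>a b. edge a b \<longrightarrow> edge (f a) (f b)" "f x = y"
    using homogeneous[OF assms] by blast
  have "map f ` {l \<in> D5_lists. x \<in> set l} \<subseteq> {l \<in> D5_lists. y \<in> set l}"
    using D5_transfer[OF _ f(1,2)] f(3) unfolding D5_lists_def by fastforce
  moreover have "inj_on (map f) {l \<in> D5_lists. x \<in> set l}"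
    using D5_lists_memD(1) by (intro inj_on_mapI inj_on_subset[OF f(1)]) blast
  ultimately show ?thesis
    using finite_D5_lists by (intro card_inj_on_le) auto
qed

lemma sum_card_D5_lists_inter:
  assumes "X \<subseteq> V" "x0 \<in> V"
  shows "(\<Sum>l\<in>D5_lists. card {x \<in> X. x \<in> set l}) = card {l \<in> D5_lists. x0 \<in> set l} * card X"
proof (rule sum_multicount[OF finite_D5_lists])
  show "finite X"
    using assms(1) finite_V finite_subset by blast
  show "\<forall>x\<in>X. card {l \<in> D5_lists. x \<in> set l} = card {l \<in> D5_lists. x0 \<in> set l}"
    using assms card_D5_lists_through_le le_antisym by blast
qed

lemma card_D5_lists_less_sum_card_cover:
  assumes "X \<subseteq> V" "\<forall>v a b c d. D5 v a b c d \<longrightarrow> {v, a, b, c, d} \<inter> X \<noteq> {}"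
  shows "card D5_lists < (\<Sum>l\<in>D5_lists. card {x \<in> X. x \<in> set l})"
proof -
  have "finite X"
    using assms(1) finite_V finite_subset by blast
  have "\<forall>l\<in>D5_lists. 1 \<le> card {x \<in> X. x \<in> set l}"
  proof
    fix l assume "l \<in> D5_lists"
    then obtain v a b c d where "l = [v, a, b, c, d]" "D5 v a b c d"
      unfolding D5_lists_def by blast
    then have "{x \<in> X. x \<in> set l} \<noteq> {}"
      using assms(2)[rule_format, of v a b c d] by auto
    then show "1 \<le> card {x \<in> X. x \<in> set l}"
      using \<open>finite X\<close> by (simp add: Suc_le_eq card_gt_0_iff)
  qed
  moreover obtain v a b c d where "D5 v a b c d" "2 \<le> card ({v, a, b, c, d} \<inter> X)"
    using D5_meeting_cover_twice[OF assms] .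
  then have "\<exists>l\<in>D5_lists. 1 < card {x \<in> X. x \<in> set l}"
    unfolding D5_lists_def by (intro bexI[of _ "[v, a, b, c, d]"]) (auto simp: Int_def conj_commute)
  ultimately have "(\<Sum>l\<in>D5_lists. 1) < (\<Sum>l\<in>D5_lists. card {x \<in> X. x \<in> set l})"
    by (intro sum_strict_mono_ex1[OF finite_D5_lists]) auto
  then show ?thesis
    by simp
qed

lemma card_V_less_5_card_cover:
  assumes "X \<subseteq> V" "\<forall>v a b c d. D5 v a b c d \<longrightarrow> {v, a, b, c, d} \<inter> X \<noteq> {}"
  shows "card V < 5 * card X"
proof -
  obtain v0 a0 b0 c0 d0 where "D5 v0 a0 b0 c0 d0"
    using D5_exists by blast
  then have v0: "v0 \<in> V"
    using D5_subset_V by blast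
  define T where "T = card {l \<in> D5_lists. v0 \<in> set l}"
  have "5 * card D5_lists = (\<Sum>l\<in>D5_lists. card {x \<in> V. x \<in> set l})"
    using D5_lists_memD by (simp add: Collect_conj_eq Int_absorb1 Int_commute)
  also have "\<dots> = T * card V"
    unfolding T_def using sum_card_D5_lists_inter[OF _ v0] by blast
  finally have count_V: "5 * card D5_lists = T * card V" .
  have "card D5_lists < T * card X"
    using card_D5_lists_less_sum_card_cover[OF assms] sum_card_D5_lists_inter[OF assms(1) v0]
    unfolding T_def by simp
  then have "T * card V < T * (5 * card X)"
    using count_V by linarith
  then show ?thesis
    by (rule mult_less_cancel1[THEN iffD1, THEN conjunct2])
qed

end

definition strict_adj :: "'e set \<Rightarrow> ('e \<Rightarrow> 'v set) \<Rightarrow> 'v \<Rightarrow> 'v \<Rightarrow> bool" where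
  "strict_adj E ends x y \<longleftrightarrow> adj E ends x y \<and> x \<noteq> y"

lemma adj_sym: "adj E ends x y \<Longrightarrow> adj E ends y x"
  unfolding adj_def by (simp add: insert_commute)

lemma adj_in_vertices:
  assumes "multigraph V E ends" "adj E ends x y"
  shows "x \<in> V" "y \<in> V"
  using assms unfolding multigraph_def adj_def by blast+

lemma is_aut_adj:
  assumes "is_aut V E ends f g" "adj E ends x y"
  shows "adj E ends (f x) (f y)"
proof -
  obtain e where "e \<in> E" "ends e = {x, y}"
    using assms(2) unfolding adj_def by blast
  moreover have "g e \<in> E" "ends (g e) = f ` ends e"
    using assms(1) calculation(1) unfolding is_aut_def bij_betw_def by auto
  ultimately show ?thesis
    unfolding adj_def by auto
qed

lemma homogeneous_graph_strict_adj:
  assumes "multigraph V E ends" "vertex_transitive V E ends"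
  shows "homogeneous_graph V (strict_adj E ends)"
proof
  fix x y
  show "strict_adj E ends x y \<Longrightarrow> strict_adj E ends y x"
    unfolding strict_adj_def by (blast intro: adj_sym)
  show "\<not> strict_adj E ends x x"
    unfolding strict_adj_def by simp
  show "strict_adj E ends x y \<Longrightarrow> x \<in> V"
    unfolding strict_adj_def using adj_in_vertices[OF assms(1)] by blast
  assume "x \<in> V" "y \<in> V"
  then obtain f g where aut: "is_aut V E ends f g" "f x = y"
    using assms(2) unfolding vertex_transitive_def by blast
  then have inj: "inj_on f V"
    unfolding is_aut_def bij_betw_def by blast
  have "strict_adj E ends (f a) (f b)" if "strict_adj E ends a b" for a b
  proof -
    have "adj E ends a b" "a \<noteq> b" "a \<in> V" "b \<in> V"
      using that adj_in_vertices[OF assms(1)] unfolding strict_adj_def by auto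
    then show ?thesis
      using is_aut_adj[OF aut(1)] inj unfolding strict_adj_def inj_on_def by blast
  qed
  then show "\<exists>f. inj_on f V \<and> (\<forall>a b. strict_adj E ends a b \<longrightarrow> strict_adj E ends (f a) (f b)) \<and> f x = y"
    using inj aut(2) by blast
qed

lemma D5_copy_iff:
  assumes "multigraph V E ends"
  shows "D5_copy V E ends v a b c d \<longleftrightarrow> D5_embedding (strict_adj E ends) v a b c d"
  unfolding D5_copy_def D5_embedding_def strict_adj_def
  using adj_in_vertices[OF assms] by auto

lemma finite_D5_graph_strict_adj:
  assumes "multigraph V E ends" "vertex_transitive V E ends" "connected_graph V E ends"
    and "finite V" "5 < card V" "\<exists>v a b c d. D5_copy V E ends v a b c d"
  shows "finite_D5_graph V (strict_adj E ends)"
proof -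
  interpret homogeneous_graph V "strict_adj E ends"
    using assms(1,2) by (rule homogeneous_graph_strict_adj)
  show ?thesis
  proof
    fix S x
    assume S: "S \<subseteq> V" "x \<in> S" "\<forall>s\<in>S. \<forall>y. strict_adj E ends s y \<longrightarrow> y \<in> S"
    have "y \<in> S" if "y \<in> V" for y
    proof -
      have "(x, y) \<in> {(u, w). adj E ends u w}\<^sup>*"
        using assms(3) S(1,2) that unfolding connected_graph_def by blast
      then show ?thesis
      proof (induction rule: rtrancl_induct)
        case (step z w)
        then show ?case
          using S(3) unfolding strict_adj_def by (cases "z = w") auto
      qed (use S(2) in simp)
    qed
    then show "S = V"
      using S(1) by blast
  qed (use assms(4,5,6) D5_copy_iff[OF assms(1)] in auto)
qed

lemma Upsilon_v_D5_infinite: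
  assumes "multigraph V E ends" "vertex_transitive V E ends"
    and "infinite V" "\<exists>v a b c d. D5_copy V E ends v a b c d"
  shows "Upsilon_v_D5 V E ends = \<infinity>"
proof -
  interpret homogeneous_graph V "strict_adj E ends"
    using assms(1,2) by (rule homogeneous_graph_strict_adj)
  have "\<not> D5_vertex_cover V E ends X" if fin: "finite X" for X
  proof
    assume "D5_vertex_cover V E ends X"
    then have cover: "\<forall>v a b c d. D5 v a b c d \<longrightarrow> {v, a, b, c, d} \<inter> X \<noteq> {}"
      unfolding D5_vertex_cover_def D5_copy_iff[OF assms(1)] by blast
    obtain v a b c d where "D5 v a b c d" "{v, a, b, c, d} \<inter> X = {}"
      using D5_avoiding_finite_set[OF assms(3) fin] assms(4)
      unfolding D5_copy_iff[OF assms(1)] by blast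
    then show False
      using cover by blast
  qed
  then show ?thesis
    unfolding Upsilon_v_D5_def by (simp add: Inf_enat_def)
qed

lemma INF_enat_attained:
  assumes "(INF X\<in>C. enat (h X)) \<noteq> \<infinity>"
  obtains X where "X \<in> C" "(INF X\<in>C. enat (h X)) = enat (h X)"
proof -
  have "(\<lambda>X. enat (h X)) ` C \<noteq> {}"
    using assms by (auto simp: Inf_enat_def)
  then have "(INF X\<in>C. enat (h X)) \<in> (\<lambda>X. enat (h X)) ` C"
    unfolding Inf_enat_def by (auto intro: LeastI)
  then show thesis
    using that by blast
qed

theorem theorem2:
  fixes V :: "'v set" and E :: "'e set" and ends :: "'e \<Rightarrow> 'v set"
  assumes "multigraph V E ends"
    and "vertex_transitive V E ends"
    and "connected_graph V E ends"
    and "infinite V \<or> card V > 5"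
    and "\<exists>v a b c d. D5_copy V E ends v a b c d"
    and "Upsilon_v_D5 V E ends \<noteq> \<infinity>"
  shows "Upsilon_v_sym_D5 V E ends < 5 * Upsilon_v_D5 V E ends"
proof -
  have "finite V"
    using Upsilon_v_D5_infinite[OF assms(1,2) _ assms(5)] assms(6) by blast
  then interpret finite_D5_graph V "strict_adj E ends"
    using finite_D5_graph_strict_adj assms(1-5) by blast
  obtain X where X: "finite X" "D5_vertex_cover V E ends X" "Upsilon_v_D5 V E ends = enat (card X)"
    using INF_enat_attained[OF assms(6)[unfolded Upsilon_v_D5_def]]
    unfolding Upsilon_v_D5_def by blast
  have "card V < 5 * card X"
    using card_V_less_5_card_cover X(2)
    unfolding D5_vertex_cover_def D5_copy_iff[OF assms(1)] by blast
  then have less: "enat (card V) < 5 * Upsilon_v_D5 V E ends"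
    using X(3) by (simp add: numeral_eq_enat)
  have "D5_vertex_cover V E ends V" "aut_invariant V E ends V"
    unfolding D5_vertex_cover_def D5_copy_def aut_invariant_def is_aut_def bij_betw_def by auto
  then have "Upsilon_v_sym_D5 V E ends \<le> enat (card V)"
    unfolding Upsilon_v_sym_D5_def using \<open>finite V\<close> by (intro INF_lower) simp
  also note less
  finally show ?thesis .
qed

end
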